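(* Let $\varphi\in\mathcal{S}(\mathbb{R})$ and set $F(\rho,y)=\varphi(\rho y)-\varphi(\rho\sinh(y))$. Then for all integers $n,m\ge0$, all $1\le p\le\infty$, and $\rho\ge1$, \[ \|\partial_\rho^n(\rho^{-1}\partial_y)^mF(\rho,\cdot)\|_{L^p_y}\leq C_{n,m}(\|\varphi\|_{\mathcal S})\,\rho^{-2-\frac1p}. \]
   Context: $C_{n,m}(\|\varphi\|_{\mathcal S})$ denotes a positive constant depending on $n,m$ and finitely many Schwartz seminorms of $\varphi$. $L^p_y$ is the Lebesgue space in $y\in\mathbb{R}$ at fixed $\rho$. *)

theory Defs
  imports "HOL-Analysis.Analysis"
begin

fun hderiv :: "nat \<Rightarrow> (real \<Rightarrow> complex) \<Rightarrow> real \<Rightarrow> complex" where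
  "hderiv 0 f = f"
| "hderiv (Suc l) f = (\<lambda>x. vector_derivative (hderiv l f) (at x))"

definition schwartz :: "(real \<Rightarrow> complex) \<Rightarrow> bool" where
  "schwartz f \<longleftrightarrow>
     (\<forall>l x. hderiv l f differentiable at x) \<and>
     (\<forall>k l. \<exists>C. \<forall>x. \<bar>x\<bar> ^ k * norm (hderiv l f x) \<le> C)"

definition schwartz_seminorm :: "nat \<Rightarrow> nat \<Rightarrow> (real \<Rightarrow> complex) \<Rightarrow> real" where
  "schwartz_seminorm k l f = (SUP x. \<bar>x\<bar> ^ k * norm (hderiv l f x))"

definition schwartz_norm :: "nat \<Rightarrow> (real \<Rightarrow> complex) \<Rightarrow> real" where
  "schwartz_norm N f = Max ((\<lambda>(k, l). schwartz_seminorm k l f) ` ({..N} \<times> {..N}))"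

definition d_rho :: "(real \<Rightarrow> real \<Rightarrow> complex) \<Rightarrow> real \<Rightarrow> real \<Rightarrow> complex" where
  "d_rho G = (\<lambda>\<rho> y. vector_derivative (\<lambda>r. G r y) (at \<rho>))"

definition d_y_scaled :: "(real \<Rightarrow> real \<Rightarrow> complex) \<Rightarrow> real \<Rightarrow> real \<Rightarrow> complex" where
  "d_y_scaled G = (\<lambda>\<rho> y. complex_of_real (1 / \<rho>) * vector_derivative (\<lambda>t. G \<rho> t) (at y))"

definition Ffun :: "(real \<Rightarrow> complex) \<Rightarrow> real \<Rightarrow> real \<Rightarrow> complex" where
  "Ffun \<phi> = (\<lambda>\<rho> y. \<phi> (\<rho> * y) - \<phi> (\<rho> * sinh y))"

end

theory Submission
  imports Defs "HOL-Real_Asymp.Real_Asymp"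
begin

text \<open>
  The operators d/d\<rho> and \<rho>^-1 d/dy map a term c \<rho>^a g^i (g')^j (g'')^k (g''')^l \<phi>^(p)(\<rho> g(y)) to a finite
  sum of terms of the same shape, where g is the identity or sinh (so that g'''' = g''). Hence the
  derivative of F is a finite sum of differences between such a term for g = id and for g = sinh.
  Both operators preserve the invariant that the net power a - i - k of \<rho>, left after writing
  sinh^(i+k) y in terms of \<rho> sinh y, is at most 0, and at most -2 as soon as a factor g'' or g'''
  occurs. Such terms vanish for g = id and are O(\<rho>^-2 (1 + \<rho>|y|)^-2) by the decay of \<phi> at
  \<rho> sinh y. The remaining terms are h(\<rho> y) - cosh^j y h(\<rho> sinh y) with h(z) = z^i \<phi>^(p)(z):
  the factor cosh^j y - 1 \<le> j cosh^j y sinh^2 y gains \<rho>^-2, and h(\<rho> y) - h(\<rho> sinh y) is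
  estimated by the mean value theorem for |y| \<le> 1, where |sinh y - y| \<le> 3|y|^3, and by decay
  otherwise. So the derivative is O(\<rho>^-2 (1 + \<rho>|y|)^-2), and the L^p norm of (1 + \<rho>|y|)^-2 is
  O(\<rho>^(-1/p)).
\<close>

section \<open>Hyperbolic functions\<close>

lemma abs_le_abs_sinh: "\<bar>y\<bar> \<le> \<bar>sinh (y::real)\<bar>"
  using real_le_abs_sinh[of y] by (simp add: sinh_field_def exp_minus)

lemma self_le_sinh: "0 \<le> y \<Longrightarrow> y \<le> sinh (y::real)"
  using abs_le_abs_sinh[of y] by simp

lemma DERIV_nonneg_imp_le_from_0:
  fixes f f' :: "real \<Rightarrow> real"
  assumes "0 \<le> y" "\<And>t. (f has_real_derivative f' t) (at t)" "\<And>t. 0 \<le> t \<Longrightarrow> 0 \<le> f' t"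
  shows "f 0 \<le> f y"
  using assms by (intro DERIV_nonneg_imp_nondecreasing[of 0 y f]) auto

lemma cosh_sub_one_le_mult_sinh: "0 \<le> y \<Longrightarrow> cosh y - 1 \<le> y * sinh (y::real)"
  using DERIV_nonneg_imp_le_from_0[of y "\<lambda>t. t * sinh t - cosh t + 1" "\<lambda>t. t * cosh t"]
  by (force intro!: derivative_eq_intros simp: algebra_simps)

lemma sinh_le_mult_cosh: "0 \<le> y \<Longrightarrow> sinh y \<le> y * cosh (y::real)"
  using DERIV_nonneg_imp_le_from_0[of y "\<lambda>t. t * cosh t - sinh t" "\<lambda>t. t * sinh t"]
  by (force intro!: derivative_eq_intros simp: algebra_simps)

lemma sinh_sub_self_le: "0 \<le> y \<Longrightarrow> sinh y - y \<le> y ^ 3 * cosh (y::real)"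
proof -
  assume y: "0 \<le> y"
  have "0 \<le> 3 * t\<^sup>2 * cosh t + t ^ 3 * sinh t - cosh t + 1" if t: "0 \<le> t" for t :: real
  proof -
    have "cosh t - 1 \<le> t * (t * cosh t)"
      using cosh_sub_one_le_mult_sinh[OF t] mult_left_mono[OF sinh_le_mult_cosh[OF t] t] by linarith
    moreover have "0 \<le> t ^ 3 * sinh t" "0 \<le> t * (t * cosh t)" using t by simp_all
    ultimately show ?thesis by (simp add: power2_eq_square algebra_simps)
  qed
  then show ?thesis
    using DERIV_nonneg_imp_le_from_0[of y "\<lambda>t. t ^ 3 * cosh t - sinh t + t"
        "\<lambda>t. 3 * t\<^sup>2 * cosh t + t ^ 3 * sinh t - cosh t + 1", OF y]
    by (force intro!: derivative_eq_intros simp: algebra_simps)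
qed

lemma cosh_le_3: "\<bar>y\<bar> \<le> 1 \<Longrightarrow> cosh (y::real) \<le> 3"
proof -
  assume "\<bar>y\<bar> \<le> 1"
  then have "cosh y \<le> cosh 1"
    using cosh_real_nonneg_le_iff[of "\<bar>y\<bar>" 1] by simp
  also have "\<dots> \<le> exp 1"
    using cosh_plus_sinh[of "1::real"] sinh_real_nonneg_iff[of 1] by linarith
  also have "\<dots> \<le> 3" by (rule exp_le)
  finally show ?thesis .
qed

lemma abs_sinh_sub_self_le: "\<bar>y\<bar> \<le> 1 \<Longrightarrow> \<bar>sinh y - y\<bar> \<le> 3 * \<bar>y::real\<bar> ^ 3"
proof -
  assume y: "\<bar>y\<bar> \<le> 1"
  have "\<bar>sinh y - y\<bar> = sinh \<bar>y\<bar> - \<bar>y\<bar>"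
    using self_le_sinh[of y] self_le_sinh[of "-y"] by (cases "0 \<le> y") auto
  also have "\<dots> \<le> \<bar>y\<bar> ^ 3 * cosh y"
    using sinh_sub_self_le[of "\<bar>y\<bar>"] by simp
  also have "\<dots> \<le> \<bar>y\<bar> ^ 3 * 3"
    using cosh_le_3[OF y] by (intro mult_left_mono) auto
  finally show ?thesis by simp
qed

lemma cosh_le_1_plus_abs_sinh: "cosh (y::real) \<le> 1 + \<bar>sinh y\<bar>"
proof (rule power2_le_imp_le)
  show "(cosh y)\<^sup>2 \<le> (1 + \<bar>sinh y\<bar>)\<^sup>2"
    using cosh_square_eq[of y] abs_ge_zero[of "sinh y"] by (simp add: power2_eq_square algebra_simps)
qed simp

lemma cosh_sub_one_le_sinh_square: "cosh (y::real) - 1 \<le> sinh y ^ 2"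
proof -
  have "(cosh y - 1) * 1 \<le> (cosh y - 1) * (cosh y + 1)"
    using cosh_real_ge_1[of y] by (intro mult_left_mono) auto
  also have "\<dots> = sinh y ^ 2"
    using cosh_square_eq[of y] by (simp add: power2_eq_square algebra_simps)
  finally show ?thesis by simp
qed

lemma power_sub_one_le: "1 \<le> (c::real) \<Longrightarrow> c ^ r - 1 \<le> real r * c ^ r * (c - 1)"
proof (induction r)
  case (Suc r)
  have "c ^ Suc r - 1 = c * (c ^ r - 1) + (c - 1)" by (simp add: algebra_simps)
  also have "\<dots> \<le> c * (real r * c ^ r * (c - 1)) + c ^ Suc r * (c - 1)"
    using Suc mult_right_mono[OF one_le_power[OF Suc.prems, of "Suc r"], of "c - 1"]
    by (intro add_mono mult_left_mono) auto
  also have "\<dots> = real (Suc r) * c ^ Suc r * (c - 1)" by (simp add: algebra_simps)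
  finally show ?case .
qed simp

lemma cosh_power_sub_one_le:
  assumes "1 \<le> \<rho>"
  shows "(cosh y ^ r - 1) * \<rho>\<^sup>2 \<le> real r * (1 + \<bar>\<rho> * sinh y\<bar>) ^ (r + 2)"
proof -
  define s where "s = \<rho> * sinh y"
  have c1: "1 \<le> cosh y" by (rule cosh_real_ge_1)
  have cs: "cosh y \<le> 1 + \<bar>s\<bar>"
    using cosh_le_1_plus_abs_sinh[of y] mult_right_mono[OF assms abs_ge_zero[of "sinh y"]] assms
    by (simp add: s_def abs_mult)
  have "(cosh y ^ r - 1) * \<rho>\<^sup>2 \<le> (real r * cosh y ^ r * (cosh y - 1)) * \<rho>\<^sup>2"
    using power_sub_one_le[OF c1, of r] by (intro mult_right_mono) auto
  also have "\<dots> \<le> (real r * cosh y ^ r * sinh y ^ 2) * \<rho>\<^sup>2"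
    using cosh_sub_one_le_sinh_square[of y] c1 by (intro mult_right_mono mult_left_mono) auto
  also have "\<dots> = real r * (cosh y ^ r * \<bar>s\<bar>\<^sup>2)"
    by (simp add: s_def power_mult_distrib)
  also have "\<dots> \<le> real r * ((1 + \<bar>s\<bar>) ^ r * (1 + \<bar>s\<bar>)\<^sup>2)"
    using cs c1 by (intro mult_left_mono mult_mono power_mono) auto
  finally show ?thesis by (simp only: s_def power_add)
qed

section \<open>Cancellation estimates\<close>

lemma norm_diff_le_derivative_bound:
  fixes h h' :: "real \<Rightarrow> 'a::real_normed_vector"
  assumes dh: "\<And>z. (h has_vector_derivative h' z) (at z)"
    and B: "\<And>z. z \<in> closed_segment a b \<Longrightarrow> norm (h' z) \<le> B"
  shows "norm (h a - h b) \<le> B * \<bar>a - b\<bar>"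
proof -
  have "norm (h a - h b) \<le> B * norm (a - b)"
  proof (rule differentiable_bound[of "closed_segment a b" h "\<lambda>z u. u *\<^sub>R h' z"])
    show "(h has_derivative (\<lambda>u. u *\<^sub>R h' z)) (at z within closed_segment a b)" for z
      using dh[of z] unfolding has_vector_derivative_def by (rule has_derivative_at_withinI)
    show "onorm (\<lambda>u. u *\<^sub>R h' z) \<le> B" if "z \<in> closed_segment a b" for z
      using onorm_scaleR_left[OF bounded_linear_ident, of "h' z"] B[OF that] by (simp add: onorm_id)
  qed auto
  then show ?thesis by simp
qed

lemma weighted_norm_le_of_decay:
  fixes h :: "real \<Rightarrow> 'a::real_normed_vector"
  assumes Hh: "\<And>z. (1 + \<bar>z\<bar>) ^ n * norm (h z) \<le> H" and "m \<le> n" and "\<bar>x\<bar> \<le> \<bar>z\<bar>"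
  shows "(1 + \<bar>x\<bar>) ^ m * norm (h z) \<le> H"
proof -
  have "(1 + \<bar>x\<bar>) ^ m \<le> (1 + \<bar>z\<bar>) ^ n"
    using assms(2,3) order_trans[OF power_mono power_increasing] by (metis abs_ge_zero add_left_mono
        add_nonneg_nonneg le_add_same_cancel1 zero_le_one)
  then show ?thesis using Hh[of z] by (meson mult_right_mono norm_ge_zero order_trans)
qed

lemma norm_sub_cosh_power_mult_self_le:
  fixes h :: "real \<Rightarrow> complex"
  assumes Hh: "\<And>z. (1 + \<bar>z\<bar>) ^ (r + 4) * norm (h z) \<le> H" and \<rho>: "1 \<le> \<rho>"
  shows "norm (h (\<rho> * sinh y) - complex_of_real (cosh y ^ r) * h (\<rho> * sinh y)) * (\<rho>\<^sup>2 * (1 + \<rho> * \<bar>y\<bar>)\<^sup>2)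
    \<le> real r * H"
proof -
  define s where "s = \<rho> * sinh y"
  have "norm (h s - complex_of_real (cosh y ^ r) * h s) = (cosh y ^ r - 1) * norm (h s)"
  proof -
    have "h s - complex_of_real (cosh y ^ r) * h s = complex_of_real (1 - cosh y ^ r) * h s"
      by (simp add: algebra_simps)
    moreover have "\<bar>1 - cosh y ^ r\<bar> = cosh y ^ r - 1"
      using one_le_power[OF cosh_real_ge_1, of y r] by simp
    ultimately show ?thesis by (metis norm_mult norm_of_real)
  qed
  then have "norm (h s - complex_of_real (cosh y ^ r) * h s) * (\<rho>\<^sup>2 * (1 + \<rho> * \<bar>y\<bar>)\<^sup>2)
      = ((cosh y ^ r - 1) * \<rho>\<^sup>2) * ((1 + \<rho> * \<bar>y\<bar>)\<^sup>2 * norm (h s))"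
    by (simp only: mult_ac)
  also have "\<dots> \<le> ((cosh y ^ r - 1) * \<rho>\<^sup>2) * ((1 + \<bar>s\<bar>)\<^sup>2 * norm (h s))"
    using abs_le_abs_sinh[of y] \<rho> one_le_power[OF cosh_real_ge_1, of y r]
    by (intro mult_left_mono mult_right_mono power_mono) (auto simp: s_def abs_mult)
  also have "\<dots> \<le> (real r * (1 + \<bar>s\<bar>) ^ (r + 2)) * ((1 + \<bar>s\<bar>)\<^sup>2 * norm (h s))"
    using cosh_power_sub_one_le[OF \<rho>, of y r] by (intro mult_right_mono) (auto simp: s_def)
  also have "\<dots> = real r * ((1 + \<bar>s\<bar>) ^ (r + 4) * norm (h s))"
    using power_add[of "1 + \<bar>s\<bar>" "r + 2" 2] by (simp only: mult.assoc add.assoc numeral_Bit0)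
  also have "\<dots> \<le> real r * H"
    using Hh[of s] by (intro mult_left_mono) simp_all
  finally show ?thesis by (simp add: s_def)
qed

lemma abs_le_on_segment_sinh:
  fixes \<rho> y z :: real
  assumes "0 \<le> \<rho>" and "z \<in> closed_segment (\<rho> * y) (\<rho> * sinh y)"
  shows "\<bar>\<rho> * y\<bar> \<le> \<bar>z\<bar>"
proof (cases "0 \<le> y")
  case True
  then have "0 \<le> \<rho> * y" "\<rho> * y \<le> \<rho> * sinh y"
    using assms(1) self_le_sinh[of y] by (auto intro: mult_left_mono)
  then show ?thesis using assms(2) by (auto simp: closed_segment_eq_real_ivl)
next
  case False
  then have "\<rho> * y \<le> 0" "\<rho> * sinh y \<le> \<rho> * y"
    using assms(1) self_le_sinh[of "-y"] by (auto simp: mult_nonneg_nonpos intro: mult_left_mono)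
  then show ?thesis using assms(2) by (auto simp: closed_segment_eq_real_ivl split: if_splits)
qed

lemma norm_sub_sinh_near_zero_le:
  fixes h h' :: "real \<Rightarrow> complex"
  assumes dh: "\<And>z. (h has_vector_derivative h' z) (at z)"
    and Hd: "\<And>z. (1 + \<bar>z\<bar>) ^ 5 * norm (h' z) \<le> H" and \<rho>: "1 \<le> \<rho>" and y: "\<bar>y\<bar> \<le> 1"
  shows "norm (h (\<rho> * y) - h (\<rho> * sinh y)) * (\<rho>\<^sup>2 * (1 + \<rho> * \<bar>y\<bar>)\<^sup>2) \<le> 3 * H"
proof -
  define t where "t = \<rho> * \<bar>y\<bar>"
  have t: "0 \<le> t" using \<rho> by (simp add: t_def)
  have H: "0 \<le> H" using Hd[of 0] by (simp add: order_trans[OF norm_ge_zero])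
  have "norm (h (\<rho> * y) - h (\<rho> * sinh y)) \<le> (H / (1 + t) ^ 5) * \<bar>\<rho> * y - \<rho> * sinh y\<bar>"
  proof (rule norm_diff_le_derivative_bound[OF dh])
    fix z assume "z \<in> closed_segment (\<rho> * y) (\<rho> * sinh y)"
    then have "(1 + t) ^ 5 * norm (h' z) \<le> H"
      using weighted_norm_le_of_decay[OF Hd order_refl abs_le_on_segment_sinh] \<rho>
      by (simp add: t_def abs_mult)
    then show "norm (h' z) \<le> H / (1 + t) ^ 5" using t by (simp add: field_simps)
  qed
  also have "\<dots> \<le> (H / (1 + t) ^ 5) * (3 * \<rho> * \<bar>y\<bar> ^ 3)"
  proof (rule mult_left_mono)
    have "\<bar>\<rho> * y - \<rho> * sinh y\<bar> = \<rho> * \<bar>sinh y - y\<bar>"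
      using \<rho> by (simp add: abs_mult right_diff_distrib[symmetric] abs_minus_commute)
    then show "\<bar>\<rho> * y - \<rho> * sinh y\<bar> \<le> 3 * \<rho> * \<bar>y\<bar> ^ 3"
      using mult_left_mono[OF abs_sinh_sub_self_le[OF y], of \<rho>] \<rho> by simp
  qed (use H t in simp)
  finally have "norm (h (\<rho> * y) - h (\<rho> * sinh y)) * (\<rho>\<^sup>2 * (1 + t)\<^sup>2)
      \<le> (H / (1 + t) ^ 5) * (3 * \<rho> * \<bar>y\<bar> ^ 3) * (\<rho>\<^sup>2 * (1 + t)\<^sup>2)"
    by (rule mult_right_mono) simp
  also have "\<dots> = (H / (1 + t) ^ 5) * 3 * (\<rho> * \<bar>y\<bar> ^ 3 * \<rho>\<^sup>2) * (1 + t)\<^sup>2"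
    by (simp add: mult_ac)
  also have "\<rho> * \<bar>y\<bar> ^ 3 * \<rho>\<^sup>2 = t ^ 3"
    by (simp add: t_def power_mult_distrib power2_eq_square power3_eq_cube)
  also have "(H / (1 + t) ^ 5) * 3 * t ^ 3 * (1 + t)\<^sup>2 = 3 * H * (t / (1 + t)) ^ 3"
  proof -
    have "X \<noteq> 0 \<Longrightarrow> (H / X ^ 5) * 3 * t ^ 3 * X\<^sup>2 = 3 * H * (t / X) ^ 3" for X :: real
      by (simp add: power_divide field_simps eval_nat_numeral)
    then show ?thesis using t by simp
  qed
  also have "\<dots> \<le> 3 * H"
    using H t mult_left_mono[of "(t / (1 + t)) ^ 3" 1 "3 * H"] by (simp add: power_le_one)
  finally show ?thesis by (simp add: t_def)
qed

lemma norm_sub_sinh_far_from_zero_le: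
  fixes h :: "real \<Rightarrow> complex"
  assumes Hh: "\<And>z. (1 + \<bar>z\<bar>) ^ 4 * norm (h z) \<le> H" and \<rho>: "1 \<le> \<rho>" and y: "1 \<le> \<bar>y\<bar>"
  shows "norm (h (\<rho> * y) - h (\<rho> * sinh y)) * (\<rho>\<^sup>2 * (1 + \<rho> * \<bar>y\<bar>)\<^sup>2) \<le> 2 * H"
proof -
  define X where "X = 1 + \<rho> * \<bar>y\<bar>"
  have "\<rho> * 1 \<le> \<rho> * \<bar>y\<bar>" using y \<rho> by (intro mult_left_mono) auto
  then have "\<rho> \<le> X" by (simp add: X_def)
  then have "\<rho>\<^sup>2 * X\<^sup>2 \<le> X\<^sup>2 * X\<^sup>2" using \<rho> by (intro mult_right_mono power_mono) auto
  also have "\<dots> = X ^ 4" by (simp flip: power_add)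
  finally have "norm (h (\<rho> * y) - h (\<rho> * sinh y)) * (\<rho>\<^sup>2 * X\<^sup>2)
      \<le> (norm (h (\<rho> * y)) + norm (h (\<rho> * sinh y))) * X ^ 4"
    by (intro mult_mono norm_triangle_ineq4) auto
  also have "\<dots> = X ^ 4 * norm (h (\<rho> * y)) + X ^ 4 * norm (h (\<rho> * sinh y))"
    by (simp add: algebra_simps)
  also have "\<dots> \<le> H + H"
  proof (rule add_mono)
    have x: "\<bar>\<rho> * y\<bar> = \<rho> * \<bar>y\<bar>" using \<rho> by (simp add: abs_mult)
    have "\<bar>\<rho> * y\<bar> \<le> \<bar>\<rho> * sinh y\<bar>"
      using \<rho> abs_le_abs_sinh[of y] by (simp add: abs_mult mult_left_mono)
    then show "X ^ 4 * norm (h (\<rho> * y)) \<le> H" "X ^ 4 * norm (h (\<rho> * sinh y)) \<le> H"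
      using weighted_norm_le_of_decay[OF Hh order_refl order_refl, of "\<rho> * y"]
        weighted_norm_le_of_decay[OF Hh order_refl, of "\<rho> * y" "\<rho> * sinh y"] unfolding X_def x by auto
  qed
  finally show ?thesis by (simp add: X_def)
qed

lemma norm_sub_cosh_power_sinh_le:
  fixes h h' :: "real \<Rightarrow> complex"
  assumes dh: "\<And>z. (h has_vector_derivative h' z) (at z)"
    and Hh: "\<And>z. (1 + \<bar>z\<bar>) ^ (r + 4) * norm (h z) \<le> H"
    and Hd: "\<And>z. (1 + \<bar>z\<bar>) ^ 5 * norm (h' z) \<le> H" and \<rho>: "1 \<le> \<rho>"
  shows "norm (h (\<rho> * y) - complex_of_real (cosh y ^ r) * h (\<rho> * sinh y)) * (\<rho>\<^sup>2 * (1 + \<rho> * \<bar>y\<bar>)\<^sup>2)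
    \<le> (real r + 3) * H"
proof -
  define W where "W = \<rho>\<^sup>2 * (1 + \<rho> * \<bar>y\<bar>)\<^sup>2"
  have H: "0 \<le> H" using Hd[of 0] by (simp add: order_trans[OF norm_ge_zero])
  have "norm (h (\<rho> * y) - h (\<rho> * sinh y)) * W \<le> 3 * H"
  proof (cases "\<bar>y\<bar> \<le> 1")
    case True
    then show ?thesis unfolding W_def by (rule norm_sub_sinh_near_zero_le[OF dh Hd \<rho>])
  next
    case False
    have "(1 + \<bar>z\<bar>) ^ 4 * norm (h z) \<le> H" for z
      by (rule weighted_norm_le_of_decay[OF Hh]) auto
    then show ?thesis using norm_sub_sinh_far_from_zero_le[OF _ \<rho>, of h H y] False H
      unfolding W_def by fastforce
  qed
  moreover have "norm (h (\<rho> * sinh y) - complex_of_real (cosh y ^ r) * h (\<rho> * sinh y)) * W \<le> real r * H"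
    unfolding W_def by (rule norm_sub_cosh_power_mult_self_le[OF Hh \<rho>])
  moreover have "norm (h (\<rho> * y) - complex_of_real (cosh y ^ r) * h (\<rho> * sinh y)) * W
      \<le> norm (h (\<rho> * y) - h (\<rho> * sinh y)) * W
        + norm (h (\<rho> * sinh y) - complex_of_real (cosh y ^ r) * h (\<rho> * sinh y)) * W"
    using norm_triangle_ineq[of "h (\<rho> * y) - h (\<rho> * sinh y)"
        "h (\<rho> * sinh y) - complex_of_real (cosh y ^ r) * h (\<rho> * sinh y)"]
    by (simp add: W_def flip: distrib_right) (simp add: mult_right_mono)
  ultimately show ?thesis by (simp add: W_def algebra_simps)
qed

section \<open>Schwartz functions\<close>

lemma schwartz_hderiv_has_vector_derivative:
  assumes "schwartz \<phi>"
  shows "(hderiv p \<phi> has_vector_derivative hderiv (Suc p) \<phi> x) (at x)"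
  using assms unfolding schwartz_def by (simp add: vector_derivative_works[symmetric])

lemma schwartz_weighted_le_schwartz_norm:
  assumes S: "schwartz \<phi>" and "k \<le> N" and "l \<le> N"
  shows "\<bar>x\<bar> ^ k * norm (hderiv l \<phi> x) \<le> schwartz_norm N \<phi>"
proof -
  from S obtain C where "\<forall>x. \<bar>x\<bar> ^ k * norm (hderiv l \<phi> x) \<le> C" unfolding schwartz_def by blast
  then have "\<bar>x\<bar> ^ k * norm (hderiv l \<phi> x) \<le> schwartz_seminorm k l \<phi>"
    unfolding schwartz_seminorm_def by (intro cSUP_upper bdd_aboveI2) auto
  also have "\<dots> \<le> schwartz_norm N \<phi>"
    unfolding schwartz_norm_def using assms(2,3) by (intro Max_ge) (auto intro!: image_eqI[where x="(k, l)"])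
  finally show ?thesis .
qed

lemma schwartz_norm_nonneg: "schwartz \<phi> \<Longrightarrow> 0 \<le> schwartz_norm N \<phi>"
  using schwartz_weighted_le_schwartz_norm[of \<phi> 0 N 0 0] by (simp add: order_trans[OF norm_ge_zero])

lemma one_plus_power_le: "0 \<le> (t::real) \<Longrightarrow> (1 + t) ^ K \<le> 2 ^ K * (1 + t ^ K)"
proof (cases "t \<le> 1")
  case True
  assume t: "0 \<le> t"
  have "(1 + t) ^ K \<le> 2 ^ K" using True t by (intro power_mono) auto
  then show ?thesis using t by (simp add: order_trans)
next
  case False
  then have "(1 + t) ^ K \<le> (2 * t) ^ K" by (intro power_mono) auto
  then show ?thesis by (simp add: power_mult_distrib distrib_left add_increasing)
qed

lemma schwartz_one_plus_weighted_le:
  assumes S: "schwartz \<phi>" and "K + e \<le> N" and "l \<le> N"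
  shows "(1 + \<bar>z\<bar>) ^ K * \<bar>z\<bar> ^ e * norm (hderiv l \<phi> z) \<le> 2 ^ (K + 1) * schwartz_norm N \<phi>"
proof -
  let ?s = "schwartz_norm N \<phi>" and ?n = "norm (hderiv l \<phi> z)"
  have "(1 + \<bar>z\<bar>) ^ K * \<bar>z\<bar> ^ e * ?n \<le> (2 ^ K * (1 + \<bar>z\<bar> ^ K)) * (\<bar>z\<bar> ^ e * ?n)"
    using one_plus_power_le[of "\<bar>z\<bar>" K] by (simp only: mult.assoc[symmetric]) (intro mult_right_mono, auto)
  also have "\<dots> = 2 ^ K * (\<bar>z\<bar> ^ e * ?n + \<bar>z\<bar> ^ (K + e) * ?n)"
    by (simp add: algebra_simps power_add)
  also have "\<dots> \<le> 2 ^ K * (?s + ?s)"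
    using assms by (intro mult_left_mono add_mono schwartz_weighted_le_schwartz_norm) auto
  finally show ?thesis by simp
qed

section \<open>Weighted \<open>L\<^sup>p\<close> bounds\<close>

lemma nn_integral_inverse_square_halfline:
  assumes \<rho>: "0 < (\<rho>::real)"
  shows "(\<integral>\<^sup>+y. ennreal (1 / (1 + \<rho> * y)\<^sup>2) * indicator {0..} y \<partial>lborel) = ennreal (1 / \<rho>)"
proof -
  have "(\<integral>\<^sup>+y. ennreal (1 / (1 + \<rho> * y)\<^sup>2) * indicator {0..} y \<partial>lborel)
      = ennreal (0 - (- 1 / (\<rho> * (1 + \<rho> * 0))))"
  proof (rule nn_integral_FTC_atLeast[where F="\<lambda>x. - 1 / (\<rho> * (1 + \<rho> * x))"])
    show "((\<lambda>x. - 1 / (\<rho> * (1 + \<rho> * x))) has_real_derivative 1 / (1 + \<rho> * x)\<^sup>2) (at x)"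
      if "0 \<le> x" for x
    proof -
      have "1 + \<rho> * x \<noteq> 0" using \<rho> that by (smt (verit) mult_nonneg_nonneg)
      then show ?thesis
        using \<rho> by (auto intro!: derivative_eq_intros simp: power2_eq_square)
    qed
    show "((\<lambda>x. - 1 / (\<rho> * (1 + \<rho> * x))) \<longlongrightarrow> 0) at_top"
      using \<rho> by real_asymp
  qed auto
  then show ?thesis by simp
qed

lemma nn_integral_inverse_square_abs_le:
  assumes \<rho>: "0 < (\<rho>::real)"
  shows "(\<integral>\<^sup>+y. ennreal (1 / (1 + \<rho> * \<bar>y\<bar>)\<^sup>2) \<partial>lborel) \<le> ennreal (2 / \<rho>)"
proof -
  define g where "g y = ennreal (1 / (1 + \<rho> * y)\<^sup>2) * indicator {0..} y" for y
  have g: "g \<in> borel_measurable borel" unfolding g_def by measurable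
  have "(\<integral>\<^sup>+y. ennreal (1 / (1 + \<rho> * \<bar>y\<bar>)\<^sup>2) \<partial>lborel) \<le> (\<integral>\<^sup>+y. g y + g (0 + (-1) * y) \<partial>lborel)"
    by (intro nn_integral_mono) (auto simp: g_def indicator_def)
  also have "\<dots> = (\<integral>\<^sup>+y. g y \<partial>lborel) + (\<integral>\<^sup>+y. g (0 + (-1) * y) \<partial>lborel)"
    using g by (intro nn_integral_add) auto
  also have "(\<integral>\<^sup>+y. g (0 + (-1) * y) \<partial>lborel) = (\<integral>\<^sup>+y. g y \<partial>lborel)"
    using nn_integral_real_affine[OF g, of "-1" 0] by simp
  also have "(\<integral>\<^sup>+y. g y \<partial>lborel) = ennreal (1 / \<rho>)"
    unfolding g_def by (rule nn_integral_inverse_square_halfline[OF \<rho>])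
  finally show ?thesis
    using \<rho> by (simp flip: ennreal_plus)
qed

lemma nn_integral_powr_le_of_decay:
  fixes G :: "real \<Rightarrow> 'a::real_normed_vector"
  assumes \<rho>: "0 < \<rho>" and p: "1 \<le> p" and G: "\<And>y. norm (G y) * (1 + \<rho> * \<bar>y\<bar>)\<^sup>2 \<le> A"
  shows "(\<integral>\<^sup>+y. ennreal (norm (G y) powr p) \<partial>lborel) \<le> ennreal (A powr p * (2 / \<rho>))"
proof -
  define w where "w y = 1 / (1 + \<rho> * \<bar>y\<bar>)\<^sup>2" for y
  have pos: "0 < 1 + \<rho> * \<bar>y\<bar>" for y
    using \<rho> by (simp add: add_pos_nonneg)
  have w: "0 < w y" "w y \<le> 1" for y
    using \<rho> pos[of y] by (auto simp: w_def divide_le_eq_1 one_le_power)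
  have "norm (G y) \<le> A * w y" for y
    using G[of y] pos[of y] by (simp add: w_def field_simps)
  then have "norm (G y) powr p \<le> A powr p * w y" for y
  proof -
    have "norm (G y) powr p \<le> (A * w y) powr p"
      using \<open>norm (G y) \<le> A * w y\<close> p by (intro powr_mono2) auto
    also have "\<dots> = A powr p * w y powr p"
      using w[of y] order_trans[OF norm_ge_zero \<open>norm (G y) \<le> A * w y\<close>]
      by (simp add: powr_mult zero_le_mult_iff)
    also have "\<dots> \<le> A powr p * w y"
      using w[of y] p by (intro mult_left_mono powr_le_one_le) auto
    finally show ?thesis .
  qed
  then have "(\<integral>\<^sup>+y. ennreal (norm (G y) powr p) \<partial>lborel) \<le> (\<integral>\<^sup>+y. ennreal (A powr p) * ennreal (w y) \<partial>lborel)"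
    using w by (intro nn_integral_mono) (simp add: ennreal_mult[symmetric] less_imp_le)
  also have "\<dots> = ennreal (A powr p) * (\<integral>\<^sup>+y. ennreal (w y) \<partial>lborel)"
    unfolding w_def by (rule nn_integral_cmult) measurable
  also have "\<dots> \<le> ennreal (A powr p) * ennreal (2 / \<rho>)"
    unfolding w_def by (intro mult_left_mono nn_integral_inverse_square_abs_le[OF \<rho>]) simp
  also have "\<dots> = ennreal (A powr p * (2 / \<rho>))"
    using \<rho> by (simp flip: ennreal_mult)
  finally show ?thesis .
qed

lemma powr_rescale_le:
  fixes M \<rho> p :: real
  assumes M: "0 \<le> M" and \<rho>: "1 \<le> \<rho>" and p: "1 \<le> p"
  shows "(M / \<rho>\<^sup>2) powr p * (2 / \<rho>) \<le> (2 * M * \<rho> powr (- 2 - 1 / p)) powr p"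
proof (cases "M = 0")
  case False
  then have "0 < M" using M by simp
  have "0 < \<rho>" using \<rho> by simp
  have "M / \<rho>\<^sup>2 = M * \<rho> powr (- 2)"
    using \<open>0 < \<rho>\<close> by (simp add: powr_minus powr_numeral divide_inverse)
  then have "(M / \<rho>\<^sup>2) powr p = M powr p * \<rho> powr (- 2 * p)"
    using \<open>0 < M\<close> \<open>0 < \<rho>\<close> by (simp add: powr_mult powr_powr)
  then have "(M / \<rho>\<^sup>2) powr p * (2 / \<rho>) = 2 * (M powr p * \<rho> powr (- 2 * p - 1))"
    using \<open>0 < \<rho>\<close> by (simp add: powr_diff divide_inverse powr_minus)
  also have "\<dots> \<le> 2 powr p * (M powr p * \<rho> powr (- 2 * p - 1))"
    using powr_mono[OF p, of 2] by (intro mult_right_mono) auto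
  also have "\<dots> = (2 * M * \<rho> powr (- 2 - 1 / p)) powr p"
  proof -
    have "(- 2 - 1 / p) * p = - 2 * p - 1" using p by (simp add: algebra_simps)
    then show ?thesis using \<open>0 < M\<close> \<open>0 < \<rho>\<close> by (simp add: powr_mult powr_powr)
  qed
  finally show ?thesis .
qed simp

lemma Lp_bounds_of_weighted_decay:
  fixes G :: "real \<Rightarrow> 'a::real_normed_vector"
  assumes \<rho>: "1 \<le> \<rho>" and M: "0 \<le> M" and G: "\<And>y. norm (G y) * (\<rho>\<^sup>2 * (1 + \<rho> * \<bar>y\<bar>)\<^sup>2) \<le> M"
  shows "\<forall>p\<ge>1. (\<integral>\<^sup>+y. ennreal (norm (G y) powr p) \<partial>lborel) \<le> ennreal ((2 * M * \<rho> powr (- 2 - 1 / p)) powr p)"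
    and "AE y in lborel. norm (G y) \<le> 2 * M * \<rho> powr (- 2)"
proof -
  have weighted: "norm (G y) * (1 + \<rho> * \<bar>y\<bar>)\<^sup>2 \<le> M / \<rho>\<^sup>2" for y
    using G[of y] \<rho> by (simp add: field_simps)
  show "\<forall>p\<ge>1. (\<integral>\<^sup>+y. ennreal (norm (G y) powr p) \<partial>lborel) \<le> ennreal ((2 * M * \<rho> powr (- 2 - 1 / p)) powr p)"
  proof (intro allI impI)
    fix p :: real assume p: "1 \<le> p"
    have "(\<integral>\<^sup>+y. ennreal (norm (G y) powr p) \<partial>lborel) \<le> ennreal ((M / \<rho>\<^sup>2) powr p * (2 / \<rho>))"
      using \<rho> p weighted by (intro nn_integral_powr_le_of_decay) auto
    also have "\<dots> \<le> ennreal ((2 * M * \<rho> powr (- 2 - 1 / p)) powr p)"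
      using powr_rescale_le[OF M \<rho> p] by (rule ennreal_leI)
    finally show "(\<integral>\<^sup>+y. ennreal (norm (G y) powr p) \<partial>lborel) \<le> ennreal ((2 * M * \<rho> powr (- 2 - 1 / p)) powr p)" .
  qed
  have "norm (G y) \<le> M / \<rho>\<^sup>2" for y
    using weighted[of y] mult_left_mono[of 1 "(1 + \<rho> * \<bar>y\<bar>)\<^sup>2" "norm (G y)"] \<rho>
    by (simp add: one_le_power)
  moreover have "M / \<rho>\<^sup>2 \<le> 2 * M * \<rho> powr (- 2)"
  proof -
    have "2 * M * \<rho> powr (- 2) = 2 * (M / \<rho>\<^sup>2)"
      using \<rho> by (simp add: powr_minus powr_numeral divide_inverse)
    moreover have "0 \<le> M / \<rho>\<^sup>2" using M by simp
    ultimately show ?thesis by linarith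
  qed
  ultimately show "AE y in lborel. norm (G y) \<le> 2 * M * \<rho> powr (- 2)"
    by (intro AE_I2) (meson order_trans)
qed

section \<open>Summands and their derivatives\<close>

lemma has_vector_derivative_sum_list:
  assumes "\<And>t. t \<in> set L \<Longrightarrow> ((\<lambda>x. f t x) has_vector_derivative f' t) F"
  shows "((\<lambda>x. \<Sum>t\<leftarrow>L. f t x) has_vector_derivative (\<Sum>t\<leftarrow>L. f' t)) F"
  using assms by (induction L) (auto intro!: has_vector_derivative_add has_vector_derivative_const)

text \<open>
  Summand c a i j k l p stands for c \<rho>^a g^i (g')^j (g'')^k (g''')^l \<phi>^(p)(\<rho> g(y)); eval_summand
  receives g, g', g'', g''' as g0, g1, g2, g3.
\<close>

datatype summand = Summand real int nat nat nat nat nat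

fun eval_summand :: "(real \<Rightarrow> complex) \<Rightarrow> (real \<Rightarrow> real) \<Rightarrow> (real \<Rightarrow> real) \<Rightarrow> (real \<Rightarrow> real) \<Rightarrow> (real \<Rightarrow> real)
    \<Rightarrow> summand \<Rightarrow> real \<Rightarrow> real \<Rightarrow> complex" where
  "eval_summand \<phi> g0 g1 g2 g3 (Summand c a i j k l p) \<rho> y =
     complex_of_real (c * \<rho> powr of_int a * g0 y ^ i * g1 y ^ j * g2 y ^ k * g3 y ^ l) * hderiv p \<phi> (\<rho> * g0 y)"

text \<open>A truncated exponent i - 1 etc. is harmless when zero, since the coefficient then vanishes.\<close>

fun dy_summands :: "summand \<Rightarrow> summand list" where
  "dy_summands (Summand c a i j k l p) =
     [Summand (c * real i) (a - 1) (i - 1) (j + 1) k l p, Summand (c * real j) (a - 1) i (j - 1) (k + 1) l p,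
      Summand (c * real k) (a - 1) i j (k - 1) (l + 1) p, Summand (c * real l) (a - 1) i j (k + 1) (l - 1) p,
      Summand c a i (j + 1) k l (p + 1)]"

fun drho_summands :: "summand \<Rightarrow> summand list" where
  "drho_summands (Summand c a i j k l p) = [Summand (c * of_int a) (a - 1) i j k l p, Summand c a (i + 1) j k l (p + 1)]"

lemma eval_summand_has_vector_derivative_y:
  assumes S: "schwartz \<phi>" and \<rho>: "\<rho> > 0"
    and d0: "\<And>y. (g0 has_real_derivative g1 y) (at y)"
    and d1: "\<And>y. (g1 has_real_derivative g2 y) (at y)"
    and d2: "\<And>y. (g2 has_real_derivative g3 y) (at y)"
    and d3: "\<And>y. (g3 has_real_derivative g2 y) (at y)"
  shows "((\<lambda>y. eval_summand \<phi> g0 g1 g2 g3 s \<rho> y) has_vector_derivative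
      (complex_of_real \<rho> * (\<Sum>u\<leftarrow>dy_summands s. eval_summand \<phi> g0 g1 g2 g3 u \<rho> y))) (at y)"
proof (cases s)
  case (Summand c a i j k l p)
  define R where "R y = c * \<rho> powr of_int a * g0 y ^ i * g1 y ^ j * g2 y ^ k * g3 y ^ l" for y
  define R' where "R' y = c * \<rho> powr of_int a * (real i * g1 y * g0 y ^ (i - 1) * g1 y ^ j * g2 y ^ k * g3 y ^ l
      + g0 y ^ i * (real j * g2 y * g1 y ^ (j - 1)) * g2 y ^ k * g3 y ^ l
      + g0 y ^ i * g1 y ^ j * (real k * g3 y * g2 y ^ (k - 1)) * g3 y ^ l
      + g0 y ^ i * g1 y ^ j * g2 y ^ k * (real l * g2 y * g3 y ^ (l - 1)))" for y
  have dR: "(R has_real_derivative R' y) (at y)"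
    unfolding R_def R'_def
    by (rule derivative_eq_intros d0 d1 d2 d3 refl | simp)+ (simp add: algebra_simps)
  have "((\<lambda>y. \<rho> * g0 y) has_vector_derivative (\<rho> * g1 y)) (at y)"
    using d0[of y] by (auto intro!: derivative_eq_intros simp flip: has_real_derivative_iff_has_vector_derivative)
  then have dP: "((\<lambda>y. hderiv p \<phi> (\<rho> * g0 y)) has_vector_derivative
      ((\<rho> * g1 y) *\<^sub>R hderiv (Suc p) \<phi> (\<rho> * g0 y))) (at y)"
    using vector_diff_chain_at[OF _ schwartz_hderiv_has_vector_derivative[OF S]] by (simp add: o_def)
  have "\<rho> powr of_int a = \<rho> powr of_int (a - 1) * \<rho>"
    using \<rho> by (simp add: powr_diff)
  then have "complex_of_real (R y) * ((\<rho> * g1 y) *\<^sub>R hderiv (Suc p) \<phi> (\<rho> * g0 y))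
        + complex_of_real (R' y) * hderiv p \<phi> (\<rho> * g0 y)
      = complex_of_real \<rho> * (\<Sum>u\<leftarrow>dy_summands s. eval_summand \<phi> g0 g1 g2 g3 u \<rho> y)"
    unfolding Summand R_def R'_def
    by (simp only: dy_summands.simps eval_summand.simps list.map sum_list.Cons sum_list.Nil)
      (simp add: scaleR_conv_of_real algebra_simps)
  with has_vector_derivative_mult[OF has_vector_derivative_of_real[OF dR] dP]
  show ?thesis unfolding Summand R_def by simp
qed

lemma eval_summand_has_vector_derivative_rho:
  assumes S: "schwartz \<phi>" and \<rho>: "\<rho> > 0"
  shows "((\<lambda>r. eval_summand \<phi> g0 g1 g2 g3 s r y) has_vector_derivative
      (\<Sum>u\<leftarrow>drho_summands s. eval_summand \<phi> g0 g1 g2 g3 u \<rho> y)) (at \<rho>)"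
proof (cases s)
  case (Summand c a i j k l p)
  define M where "M = g0 y ^ i * g1 y ^ j * g2 y ^ k * g3 y ^ l"
  have dR: "((\<lambda>r. c * r powr of_int a * M) has_real_derivative (c * (of_int a * \<rho> powr (of_int a - 1)) * M)) (at \<rho>)"
    using \<rho> by (auto intro!: derivative_eq_intros)
  have "((\<lambda>r. r * g0 y) has_vector_derivative (g0 y)) (at \<rho>)"
    by (auto intro!: derivative_eq_intros simp flip: has_real_derivative_iff_has_vector_derivative)
  then have dP: "((\<lambda>r. hderiv p \<phi> (r * g0 y)) has_vector_derivative (g0 y *\<^sub>R hderiv (Suc p) \<phi> (\<rho> * g0 y))) (at \<rho>)"
    using vector_diff_chain_at[OF _ schwartz_hderiv_has_vector_derivative[OF S]] by (simp add: o_def)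
  have "(\<lambda>r. eval_summand \<phi> g0 g1 g2 g3 s r y) = (\<lambda>r. complex_of_real (c * r powr of_int a * M) * hderiv p \<phi> (r * g0 y))"
    unfolding Summand M_def by (simp add: mult.assoc)
  moreover have "complex_of_real (c * \<rho> powr of_int a * M) * (g0 y *\<^sub>R hderiv (Suc p) \<phi> (\<rho> * g0 y))
        + complex_of_real (c * (of_int a * \<rho> powr (of_int a - 1)) * M) * hderiv p \<phi> (\<rho> * g0 y)
      = (\<Sum>u\<leftarrow>drho_summands s. eval_summand \<phi> g0 g1 g2 g3 u \<rho> y)"
    unfolding Summand M_def by (simp add: scaleR_conv_of_real algebra_simps)
  ultimately show ?thesis
    using has_vector_derivative_mult[OF has_vector_derivative_of_real[OF dR] dP] by simp
qed

definition summand_difference :: "(real \<Rightarrow> complex) \<Rightarrow> summand \<Rightarrow> real \<Rightarrow> real \<Rightarrow> complex" where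
  "summand_difference \<phi> s \<rho> y =
     eval_summand \<phi> (\<lambda>y. y) (\<lambda>_. 1) (\<lambda>_. 0) (\<lambda>_. 0) s \<rho> y - eval_summand \<phi> sinh cosh sinh cosh s \<rho> y"

definition expansion :: "(real \<Rightarrow> complex) \<Rightarrow> summand list \<Rightarrow> real \<Rightarrow> real \<Rightarrow> complex" where
  "expansion \<phi> L \<rho> y = (\<Sum>s\<leftarrow>L. summand_difference \<phi> s \<rho> y)"

lemma expansion_concat:
  "expansion \<phi> (concat (map f L)) \<rho> y = (\<Sum>s\<leftarrow>L. expansion \<phi> (f s) \<rho> y)"
  by (induction L) (simp_all add: expansion_def)

lemma expansion_has_vector_derivative_y:
  assumes S: "schwartz \<phi>" and \<rho>: "\<rho> > 0"
  shows "((\<lambda>y. expansion \<phi> L \<rho> y) has_vector_derivative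
      (complex_of_real \<rho> * expansion \<phi> (concat (map dy_summands L)) \<rho> y)) (at y)"
proof -
  have "((\<lambda>y. summand_difference \<phi> s \<rho> y) has_vector_derivative
      complex_of_real \<rho> * expansion \<phi> (dy_summands s) \<rho> y) (at y)" for s
    unfolding summand_difference_def expansion_def sum_list_subtractf right_diff_distrib
    by (intro has_vector_derivative_diff eval_summand_has_vector_derivative_y[OF S \<rho>])
      (auto intro!: derivative_eq_intros)
  then have "((\<lambda>y. \<Sum>s\<leftarrow>L. summand_difference \<phi> s \<rho> y) has_vector_derivative
      (\<Sum>s\<leftarrow>L. complex_of_real \<rho> * expansion \<phi> (dy_summands s) \<rho> y)) (at y)"
    by (rule has_vector_derivative_sum_list)
  then show ?thesis
    unfolding expansion_concat sum_list_const_mult by (simp only: expansion_def[of _ L])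
qed

lemma expansion_has_vector_derivative_rho:
  assumes S: "schwartz \<phi>" and \<rho>: "\<rho> > 0"
  shows "((\<lambda>r. expansion \<phi> L r y) has_vector_derivative expansion \<phi> (concat (map drho_summands L)) \<rho> y) (at \<rho>)"
proof -
  have "((\<lambda>r. summand_difference \<phi> s r y) has_vector_derivative expansion \<phi> (drho_summands s) \<rho> y) (at \<rho>)" for s
    unfolding summand_difference_def expansion_def sum_list_subtractf
    by (intro has_vector_derivative_diff eval_summand_has_vector_derivative_rho[OF S \<rho>])
  then have "((\<lambda>r. \<Sum>s\<leftarrow>L. summand_difference \<phi> s r y) has_vector_derivative
      (\<Sum>s\<leftarrow>L. expansion \<phi> (drho_summands s) \<rho> y)) (at \<rho>)"
    by (rule has_vector_derivative_sum_list)
  then show ?thesis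
    unfolding expansion_concat by (simp only: expansion_def[of _ L])
qed

definition derivative_summands :: "nat \<Rightarrow> nat \<Rightarrow> summand list" where
  "derivative_summands n m =
     ((\<lambda>L. concat (map drho_summands L)) ^^ n) (((\<lambda>L. concat (map dy_summands L)) ^^ m) [Summand 1 0 0 0 0 0 0])"

lemma d_y_scaled_power_Ffun:
  assumes S: "schwartz \<phi>" and \<rho>: "\<rho> > 0"
  shows "(d_y_scaled ^^ m) (Ffun \<phi>) \<rho> y
    = expansion \<phi> (((\<lambda>L. concat (map dy_summands L)) ^^ m) [Summand 1 0 0 0 0 0 0]) \<rho> y"
proof (induction m arbitrary: y)
  case 0
  then show ?case by (simp add: expansion_def summand_difference_def Ffun_def)
next
  case (Suc m)
  let ?L = "((\<lambda>L. concat (map dy_summands L)) ^^ m) [Summand 1 0 0 0 0 0 0]"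
  have IH: "(d_y_scaled ^^ m) (Ffun \<phi>) \<rho> = expansion \<phi> ?L \<rho>"
    using Suc.IH by (rule ext)
  have "(d_y_scaled ^^ Suc m) (Ffun \<phi>) \<rho> y
      = complex_of_real (1 / \<rho>) * vector_derivative (\<lambda>t. expansion \<phi> ?L \<rho> t) (at y)"
    by (simp only: funpow.simps o_apply d_y_scaled_def[of "(d_y_scaled ^^ m) (Ffun \<phi>)"] IH)
  then show ?case
    using vector_derivative_at[OF expansion_has_vector_derivative_y[OF S \<rho>]] \<rho> by simp
qed

lemma d_rho_power_expansion:
  assumes S: "schwartz \<phi>" and X: "\<And>\<rho> y. \<rho> > 0 \<Longrightarrow> X \<rho> y = expansion \<phi> L \<rho> y" and \<rho>: "\<rho> > 0"
  shows "(d_rho ^^ n) X \<rho> y = expansion \<phi> (((\<lambda>L. concat (map drho_summands L)) ^^ n) L) \<rho> y"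
  using \<rho>
proof (induction n arbitrary: \<rho>)
  case 0
  then show ?case using X by simp
next
  case (Suc n)
  have "((\<lambda>r. (d_rho ^^ n) X r y) has_vector_derivative
      expansion \<phi> (((\<lambda>L. concat (map drho_summands L)) ^^ Suc n) L) \<rho> y) (at \<rho>)"
    unfolding funpow.simps(2) o_apply
    using Suc by (intro has_vector_derivative_transform_within_open[OF
          expansion_has_vector_derivative_rho[OF S] open_greaterThan[of 0]]) auto
  then show ?case
    by (simp only: funpow.simps o_apply d_rho_def[of "(d_rho ^^ n) X"] vector_derivative_at)
qed

lemma derivative_Ffun_eq_expansion:
  assumes "schwartz \<phi>" and "\<rho> > 0"
  shows "(d_rho ^^ n) ((d_y_scaled ^^ m) (Ffun \<phi>)) \<rho> y = expansion \<phi> (derivative_summands n m) \<rho> y"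
  unfolding derivative_summands_def using assms
  by (intro d_rho_power_expansion d_y_scaled_power_Ffun)

fun admissible :: "summand \<Rightarrow> bool" where
  "admissible (Summand c a i j k l p) \<longleftrightarrow> c = 0 \<or> (a \<le> int (i + k) \<and> (0 < k + l \<longrightarrow> a + 2 \<le> int (i + k)))"

lemma admissible_dy_summands: "admissible s \<Longrightarrow> u \<in> set (dy_summands s) \<Longrightarrow> admissible u"
  by (cases s) (auto simp: of_nat_diff)

lemma admissible_drho_summands: "admissible s \<Longrightarrow> u \<in> set (drho_summands s) \<Longrightarrow> admissible u"
  by (cases s) auto

lemma admissible_derivative_summands: "s \<in> set (derivative_summands n m) \<Longrightarrow> admissible s"
proof -
  have dy: "\<forall>s\<in>set (((\<lambda>L. concat (map dy_summands L)) ^^ m) [Summand 1 0 0 0 0 0 0]). admissible s"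
    by (induction m) (auto dest: admissible_dy_summands)
  have "\<forall>s\<in>set L. admissible s \<Longrightarrow> \<forall>s\<in>set (((\<lambda>L. concat (map drho_summands L)) ^^ n) L). admissible s" for L
    by (induction n) (auto dest: admissible_drho_summands)
  from this[OF dy] show "s \<in> set (derivative_summands n m) \<Longrightarrow> admissible s"
    by (simp add: derivative_summands_def)
qed

section \<open>Bounds on summands\<close>

lemma norm_summand_difference_vanishing_le:
  assumes S: "schwartz \<phi>" and \<rho>: "1 \<le> \<rho>" and kl: "0 < k + l" and a: "a + 2 \<le> int (i + k)"
    and N: "i + j + k + l + p + 2 \<le> N"
  shows "norm (summand_difference \<phi> (Summand c a i j k l p) \<rho> y) * (\<rho>\<^sup>2 * (1 + \<rho> * \<bar>y\<bar>)\<^sup>2)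
    \<le> \<bar>c\<bar> * 2 ^ (j + l + 3) * schwartz_norm N \<phi>"
proof -
  define q where "q = i + k"
  define r where "r = j + l"
  define s where "s = \<rho> * sinh y"
  define n where "n = norm (hderiv p \<phi> s)"
  have id_part: "eval_summand \<phi> (\<lambda>y. y) (\<lambda>_. 1) (\<lambda>_. 0) (\<lambda>_. 0) (Summand c a i j k l p) \<rho> y = 0"
    using kl by (cases k; cases l) auto
  have "norm (summand_difference \<phi> (Summand c a i j k l p) \<rho> y)
      = \<bar>c\<bar> * (\<rho> powr of_int a * \<bar>sinh y\<bar> ^ q) * cosh y ^ r * n"
    unfolding summand_difference_def id_part diff_0 norm_minus_cancel
    by (simp add: q_def r_def s_def n_def norm_mult norm_power abs_mult power_add power_abs mult_ac)
  also have "\<rho> powr of_int a * \<bar>sinh y\<bar> ^ q = \<rho> powr (of_int a - real q) * \<bar>s\<bar> ^ q"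
    using \<rho> by (simp add: s_def abs_mult power_mult_distrib powr_diff powr_realpow)
  finally have "norm (summand_difference \<phi> (Summand c a i j k l p) \<rho> y) * (\<rho>\<^sup>2 * (1 + \<rho> * \<bar>y\<bar>)\<^sup>2)
      = \<bar>c\<bar> * (\<rho> powr (of_int a - real q) * \<rho>\<^sup>2) * (\<bar>s\<bar> ^ q * n * (cosh y ^ r * (1 + \<rho> * \<bar>y\<bar>)\<^sup>2))"
    by (simp add: mult_ac)
  also have "\<dots> \<le> \<bar>c\<bar> * 1 * (\<bar>s\<bar> ^ q * n * ((1 + \<bar>s\<bar>) ^ r * (1 + \<bar>s\<bar>)\<^sup>2))"
  proof (intro mult_mono mult_left_mono power_mono)
    have "\<rho> powr (of_int a - real q) * \<rho>\<^sup>2 = \<rho> powr (of_int a - real q + 2)"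
      using \<rho> by (simp add: powr_add powr_numeral)
    also have "\<dots> \<le> \<rho> powr 0"
      using \<rho> a by (intro powr_mono) (auto simp: q_def)
    finally show "\<rho> powr (of_int a - real q) * \<rho>\<^sup>2 \<le> 1" using \<rho> by simp
    show "cosh y \<le> 1 + \<bar>s\<bar>"
      using cosh_le_1_plus_abs_sinh[of y] mult_right_mono[OF \<rho> abs_ge_zero[of "sinh y"]] \<rho>
      by (simp add: s_def abs_mult)
    show "1 + \<rho> * \<bar>y\<bar> \<le> 1 + \<bar>s\<bar>"
      using abs_le_abs_sinh[of y] \<rho> by (simp add: s_def abs_mult mult_left_mono)
  qed (use \<rho> in \<open>auto simp: n_def\<close>)
  also have "\<dots> = \<bar>c\<bar> * ((1 + \<bar>s\<bar>) ^ (r + 2) * \<bar>s\<bar> ^ q * n)"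
    by (simp add: power_add power2_eq_square mult_ac)
  also have "\<dots> \<le> \<bar>c\<bar> * (2 ^ (r + 3) * schwartz_norm N \<phi>)"
    using schwartz_one_plus_weighted_le[OF S, of "r + 2" q N p s] N
    by (intro mult_left_mono) (simp_all add: n_def q_def r_def power_add)
  finally show ?thesis by (simp add: r_def mult_ac)
qed

lemma norm_summand_difference_cancelling_le:
  assumes S: "schwartz \<phi>" and \<rho>: "1 \<le> \<rho>" and a: "a \<le> int i" and N: "i + j + p + 6 \<le> N"
  shows "norm (summand_difference \<phi> (Summand c a i j 0 0 p) \<rho> y) * (\<rho>\<^sup>2 * (1 + \<rho> * \<bar>y\<bar>)\<^sup>2)
    \<le> \<bar>c\<bar> * ((real j + 3) * ((real i + 1) * 2 ^ (j + 6) * schwartz_norm N \<phi>))"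
proof -
  let ?s = "schwartz_norm N \<phi>"
  define h where "h z = complex_of_real (z ^ i) * hderiv p \<phi> z" for z
  define h' where "h' z = complex_of_real (z ^ i) * hderiv (Suc p) \<phi> z
      + complex_of_real (real i * z ^ (i - 1)) * hderiv p \<phi> z" for z
  define H where "H = (real i + 1) * 2 ^ (j + 6) * ?s"
  have s: "0 \<le> ?s" by (rule schwartz_norm_nonneg[OF S])
  have dh: "(h has_vector_derivative h' z) (at z)" for z
  proof -
    have "((\<lambda>z. z ^ i) has_real_derivative (real i * z ^ (i - 1))) (at z)"
      by (rule derivative_eq_intros refl | simp)+
    then show ?thesis unfolding h_def h'_def
      by (rule has_vector_derivative_mult[OF has_vector_derivative_of_real
            schwartz_hderiv_has_vector_derivative[OF S]])
  qed
  have Hh: "(1 + \<bar>z\<bar>) ^ (j + 4) * norm (h z) \<le> H" for z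
  proof -
    have "(1 + \<bar>z\<bar>) ^ (j + 4) * norm (h z) = (1 + \<bar>z\<bar>) ^ (j + 4) * \<bar>z\<bar> ^ i * norm (hderiv p \<phi> z)"
      by (simp add: h_def norm_mult norm_power power_abs)
    also have "\<dots> \<le> 2 ^ (j + 4 + 1) * ?s"
      using N by (intro schwartz_one_plus_weighted_le[OF S]) auto
    also have "\<dots> \<le> H"
      unfolding H_def using s by (intro mult_right_mono) (auto simp: power_add)
    finally show ?thesis .
  qed
  have Hd: "(1 + \<bar>z\<bar>) ^ 5 * norm (h' z) \<le> H" for z
  proof -
    have "norm (h' z) \<le> \<bar>z\<bar> ^ i * norm (hderiv (Suc p) \<phi> z) + real i * (\<bar>z\<bar> ^ (i - 1) * norm (hderiv p \<phi> z))"
      unfolding h'_def using norm_triangle_ineq[of "complex_of_real (z ^ i) * hderiv (Suc p) \<phi> z"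
          "complex_of_real (real i * z ^ (i - 1)) * hderiv p \<phi> z"]
      by (simp add: norm_mult norm_power power_abs abs_mult)
    then have "(1 + \<bar>z\<bar>) ^ 5 * norm (h' z) \<le> (1 + \<bar>z\<bar>) ^ 5 *
        (\<bar>z\<bar> ^ i * norm (hderiv (Suc p) \<phi> z) + real i * (\<bar>z\<bar> ^ (i - 1) * norm (hderiv p \<phi> z)))"
      by (intro mult_left_mono) auto
    also have "\<dots> = (1 + \<bar>z\<bar>) ^ 5 * \<bar>z\<bar> ^ i * norm (hderiv (Suc p) \<phi> z)
        + real i * ((1 + \<bar>z\<bar>) ^ 5 * \<bar>z\<bar> ^ (i - 1) * norm (hderiv p \<phi> z))"
      by (simp add: algebra_simps)
    also have "\<dots> \<le> 2 ^ (5 + 1) * ?s + real i * (2 ^ (5 + 1) * ?s)"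
      using N by (intro add_mono mult_left_mono schwartz_one_plus_weighted_le[OF S]) auto
    also have "\<dots> = (real i + 1) * 2 ^ 6 * ?s"
      by (simp add: algebra_simps)
    also have "\<dots> \<le> H"
      unfolding H_def using s by (intro mult_right_mono mult_left_mono power_increasing) auto
    finally show ?thesis .
  qed
  have "summand_difference \<phi> (Summand c a i j 0 0 p) \<rho> y
      = complex_of_real (c * \<rho> powr (of_int a - real i))
        * (h (\<rho> * y) - complex_of_real (cosh y ^ j) * h (\<rho> * sinh y))"
    using \<rho> by (simp add: summand_difference_def h_def powr_diff powr_realpow power_mult_distrib
        algebra_simps)
  then have "norm (summand_difference \<phi> (Summand c a i j 0 0 p) \<rho> y) * (\<rho>\<^sup>2 * (1 + \<rho> * \<bar>y\<bar>)\<^sup>2)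
      = (\<bar>c\<bar> * \<rho> powr (of_int a - real i))
        * (norm (h (\<rho> * y) - complex_of_real (cosh y ^ j) * h (\<rho> * sinh y)) * (\<rho>\<^sup>2 * (1 + \<rho> * \<bar>y\<bar>)\<^sup>2))"
    by (simp add: norm_mult abs_mult mult_ac)
  also have "\<dots> \<le> (\<bar>c\<bar> * 1) * ((real j + 3) * H)"
  proof (rule mult_mono)
    show "\<bar>c\<bar> * \<rho> powr (of_int a - real i) \<le> \<bar>c\<bar> * 1"
      using \<rho> a powr_mono[of "of_int a - real i" 0 \<rho>] by (intro mult_left_mono) auto
  qed (use norm_sub_cosh_power_sinh_le[OF dh Hh Hd \<rho>] in auto)
  finally show ?thesis by (simp add: H_def)
qed

fun seminorm_index :: "summand \<Rightarrow> nat" where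
  "seminorm_index (Summand c a i j k l p) = i + j + k + l + p + 6"

lemma summand_difference_bound:
  assumes "admissible s" and "seminorm_index s \<le> N"
  shows "\<exists>K\<ge>0. \<forall>\<phi> \<rho> y. schwartz \<phi> \<longrightarrow> 1 \<le> \<rho> \<longrightarrow>
    norm (summand_difference \<phi> s \<rho> y) * (\<rho>\<^sup>2 * (1 + \<rho> * \<bar>y\<bar>)\<^sup>2) \<le> K * schwartz_norm N \<phi>"
proof (cases s)
  case (Summand c a i j k l p)
  consider "c = 0" | "c \<noteq> 0" "0 < k + l" | "c \<noteq> 0" "k = 0" "l = 0" by auto
  then show ?thesis
  proof cases
    case 1
    then show ?thesis using Summand by (auto simp: summand_difference_def)
  next
    case 2
    then show ?thesis
      using assms Summand norm_summand_difference_vanishing_le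
      by (intro exI[of _ "\<bar>c\<bar> * 2 ^ (j + l + 3)"]) auto
  next
    case 3
    then show ?thesis
      using assms Summand norm_summand_difference_cancelling_le
      by (intro exI[of _ "\<bar>c\<bar> * ((real j + 3) * ((real i + 1) * 2 ^ (j + 6)))"]) (auto simp: mult_ac)
  qed
qed

lemma expansion_bound:
  assumes "\<And>s. s \<in> set L \<Longrightarrow> admissible s \<and> seminorm_index s \<le> N"
  shows "\<exists>K\<ge>0. \<forall>\<phi> \<rho> y. schwartz \<phi> \<longrightarrow> 1 \<le> \<rho> \<longrightarrow>
    norm (expansion \<phi> L \<rho> y) * (\<rho>\<^sup>2 * (1 + \<rho> * \<bar>y\<bar>)\<^sup>2) \<le> K * schwartz_norm N \<phi>"
  using assms
proof (induction L)
  case Nil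
  then show ?case by (auto simp: expansion_def)
next
  case (Cons s L)
  obtain K1 where K1: "0 \<le> K1" "\<And>\<phi> \<rho> y. schwartz \<phi> \<Longrightarrow> 1 \<le> \<rho> \<Longrightarrow>
      norm (summand_difference \<phi> s \<rho> y) * (\<rho>\<^sup>2 * (1 + \<rho> * \<bar>y\<bar>)\<^sup>2) \<le> K1 * schwartz_norm N \<phi>"
    using summand_difference_bound Cons.prems by (metis list.set_intros(1))
  obtain K2 where K2: "0 \<le> K2" "\<And>\<phi> \<rho> y. schwartz \<phi> \<Longrightarrow> 1 \<le> \<rho> \<Longrightarrow>
      norm (expansion \<phi> L \<rho> y) * (\<rho>\<^sup>2 * (1 + \<rho> * \<bar>y\<bar>)\<^sup>2) \<le> K2 * schwartz_norm N \<phi>"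
    using Cons by auto
  have "norm (expansion \<phi> (s # L) \<rho> y) * (\<rho>\<^sup>2 * (1 + \<rho> * \<bar>y\<bar>)\<^sup>2) \<le> (K1 + K2) * schwartz_norm N \<phi>"
    if "schwartz \<phi>" "1 \<le> \<rho>" for \<phi> \<rho> y
  proof -
    have "norm (expansion \<phi> (s # L) \<rho> y) * (\<rho>\<^sup>2 * (1 + \<rho> * \<bar>y\<bar>)\<^sup>2)
        \<le> (norm (summand_difference \<phi> s \<rho> y) + norm (expansion \<phi> L \<rho> y)) * (\<rho>\<^sup>2 * (1 + \<rho> * \<bar>y\<bar>)\<^sup>2)"
      by (intro mult_right_mono) (simp_all add: expansion_def norm_triangle_ineq)
    also have "\<dots> \<le> K1 * schwartz_norm N \<phi> + K2 * schwartz_norm N \<phi>"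
      unfolding distrib_right using K1(2)[OF that] K2(2)[OF that] by (rule add_mono)
    finally show ?thesis by (simp add: distrib_right)
  qed
  then show ?case using K1(1) K2(1) by (intro exI[of _ "K1 + K2"]) auto
qed

lemma Ffun_derivative_decay:
  "\<exists>N. \<exists>K\<ge>0. \<forall>\<phi> \<rho> y. schwartz \<phi> \<longrightarrow> 1 \<le> \<rho> \<longrightarrow>
    norm ((d_rho ^^ n) ((d_y_scaled ^^ m) (Ffun \<phi>)) \<rho> y) * (\<rho>\<^sup>2 * (1 + \<rho> * \<bar>y\<bar>)\<^sup>2)
      \<le> K * schwartz_norm N \<phi>"
proof -
  define L where "L = derivative_summands n m"
  define N where "N = sum_list (map seminorm_index L)"
  have "\<exists>K\<ge>0. \<forall>\<phi> \<rho> y. schwartz \<phi> \<longrightarrow> 1 \<le> \<rho> \<longrightarrow>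
      norm (expansion \<phi> L \<rho> y) * (\<rho>\<^sup>2 * (1 + \<rho> * \<bar>y\<bar>)\<^sup>2) \<le> K * schwartz_norm N \<phi>"
    unfolding N_def by (intro expansion_bound conjI)
      (auto simp: L_def admissible_derivative_summands intro!: member_le_sum_list)
  then obtain K where "0 \<le> K" and K: "\<And>\<phi> \<rho> y. schwartz \<phi> \<Longrightarrow> 1 \<le> \<rho> \<Longrightarrow>
      norm (expansion \<phi> L \<rho> y) * (\<rho>\<^sup>2 * (1 + \<rho> * \<bar>y\<bar>)\<^sup>2) \<le> K * schwartz_norm N \<phi>"
    by blast
  show ?thesis
  proof (intro exI conjI allI impI)
    fix \<phi> \<rho> y assume "schwartz \<phi>" "1 \<le> (\<rho>::real)"
    then show "norm ((d_rho ^^ n) ((d_y_scaled ^^ m) (Ffun \<phi>)) \<rho> y) * (\<rho>\<^sup>2 * (1 + \<rho> * \<bar>y\<bar>)\<^sup>2)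
        \<le> K * schwartz_norm N \<phi>"
      using K derivative_Ffun_eq_expansion[of \<phi> \<rho> n m y] by (simp add: L_def)
  qed fact
qed

theorem lemma2p2:
  "\<forall>n m::nat. \<exists>N::nat. \<exists>C::real \<Rightarrow> real.
     \<forall>\<phi>. schwartz \<phi> \<longrightarrow>
       (\<forall>\<rho>::real. \<rho> \<ge> 1 \<longrightarrow>
          (let G = (d_rho ^^ n) ((d_y_scaled ^^ m) (Ffun \<phi>)) \<rho> in
            (\<forall>p::real. p \<ge> 1 \<longrightarrow>
               (\<integral>\<^sup>+ y. ennreal (norm (G y) powr p) \<partial>lborel)
                 \<le> ennreal ((C (schwartz_norm N \<phi>) * \<rho> powr (-2 - 1 / p)) powr p)) \<and>
            (AE y in lborel. norm (G y) \<le> C (schwartz_norm N \<phi>) * \<rho> powr (-2))))"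
proof (intro allI, goal_cases)
  case (1 n m)
  obtain N K where K: "0 \<le> K" and decay: "\<And>\<phi> \<rho> y. schwartz \<phi> \<Longrightarrow> 1 \<le> \<rho> \<Longrightarrow>
      norm ((d_rho ^^ n) ((d_y_scaled ^^ m) (Ffun \<phi>)) \<rho> y) * (\<rho>\<^sup>2 * (1 + \<rho> * \<bar>y\<bar>)\<^sup>2)
        \<le> K * schwartz_norm N \<phi>"
    using Ffun_derivative_decay[of n m] by blast
  have "0 \<le> K * schwartz_norm N \<phi>" if "schwartz \<phi>" for \<phi>
    using K schwartz_norm_nonneg[OF that] by simp
  with Lp_bounds_of_weighted_decay[OF _ _ decay] show ?case
    by (intro exI[of _ N] exI[of _ "\<lambda>s. 2 * (K * s)"]) (simp add: Let_def mult.assoc)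
qed

end
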